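(* Let $X$ be an infinite dimensional real Banach space. Then there is a closed convex set $K$ contained in the open unit ball $\{x\in X:\|x\|<1\}$ of $X$ such that $\sup\{\|x\|: x\in K\}=1$. *)

theory Defs
  imports "HOL-Analysis.Analysis"
begin

end

theory Submission
  imports Defs
begin

(* K is the unit ball of an auxiliary "weighted" norm on a suitable
   closed separable infinite-dimensional subspace Z = closure V of X:
     K = {x \<in> Z. \<forall>N. \<parallel>x\<parallel> + (\<Sum>k<N. 2^-(k+1) \<bar>f_k x\<bar>) \<le> 1},
   where f_0, f_1, ... are functionals of norm \<le> 1 that separate the points of Z.
   K is closed and convex as an intersection of closed convex sets.  If x \<in> K is
   nonzero then some f_k x \<noteq> 0, so \<parallel>x\<parallel> < 1.  Conversely, since Z is infinite
   dimensional, for every N there is a unit vector w \<in> Z annihilated by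
   f_0, ..., f_(N-1); then w/(1 + 2^-N) \<in> K, whence sup {\<parallel>x\<parallel>. x \<in> K} = 1. *)


subsection \<open>Norming functionals\<close>

definition dominated_graph :: "('a::real_normed_vector \<times> real) set \<Rightarrow> bool" where
  "dominated_graph g \<longleftrightarrow>
     (\<forall>x y y'. (x,y) \<in> g \<longrightarrow> (x,y') \<in> g \<longrightarrow> y = y') \<and>
     (\<forall>x y x' y'. (x,y) \<in> g \<longrightarrow> (x',y') \<in> g \<longrightarrow> (x + x', y + y') \<in> g) \<and>
     (\<forall>x y c. (x,y) \<in> g \<longrightarrow> (c *\<^sub>R x, c * y) \<in> g) \<and>
     (\<forall>x y. (x,y) \<in> g \<longrightarrow> y \<le> norm x)"

lemma dominated_graphD:
  assumes "dominated_graph g"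
  shows dominated_graph_fun: "\<And>x y y'. (x,y) \<in> g \<Longrightarrow> (x,y') \<in> g \<Longrightarrow> y = y'"
    and dominated_graph_add: "\<And>x y x' y'. (x,y) \<in> g \<Longrightarrow> (x',y') \<in> g \<Longrightarrow> (x + x', y + y') \<in> g"
    and dominated_graph_scale: "\<And>x y c. (x,y) \<in> g \<Longrightarrow> (c *\<^sub>R x, c * y) \<in> g"
    and dominated_graph_bound: "\<And>x y. (x,y) \<in> g \<Longrightarrow> y \<le> norm x"
  using assms unfolding dominated_graph_def by blast+

(* Starting point of the Zorn argument: the functional c x0 \<mapsto> c \<parallel>x0\<parallel> on the line through x0. *)
lemma dominated_graph_line:
  "dominated_graph {(c *\<^sub>R x0, c * norm x0) | c. True}"
proof -
  have same_value: "c * norm x0 = c' * norm x0" if "c *\<^sub>R x0 = c' *\<^sub>R x0" for c c'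
    using that by (cases "x0 = 0") auto
  have "c * norm x0 \<le> norm (c *\<^sub>R x0)" for c
    by (simp add: mult_right_mono)
  then show ?thesis
    unfolding dominated_graph_def
    by (auto simp: same_value algebra_simps intro: exI[of _ "_ + _"] exI[of _ "_ * _"])
qed

lemma dominated_graph_chain_Union:
  assumes "C \<in> chains {g. dominated_graph g}"
  shows "dominated_graph (\<Union>C)"
proof -
  have dom: "dominated_graph g" if "g \<in> C" for g
    using assms that unfolding chains_def by blast
  have common: "\<exists>g\<in>C. p \<in> g \<and> q \<in> g" if "p \<in> \<Union>C" "q \<in> \<Union>C" for p q
    using assms that unfolding chains_def chain_subset_def by blast
  show ?thesis
    unfolding dominated_graph_def
  proof (intro conjI allI impI)
    fix x y y' assume "(x,y) \<in> \<Union>C" "(x,y') \<in> \<Union>C"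
    then show "y = y'" using common dominated_graph_fun[OF dom] by blast
  next
    fix x y x' y' assume "(x,y) \<in> \<Union>C" "(x',y') \<in> \<Union>C"
    then show "(x + x', y + y') \<in> \<Union>C" using common dominated_graph_add[OF dom] by blast
  next
    fix x y c assume "(x,y) \<in> \<Union>C"
    then show "(c *\<^sub>R x, c * y) \<in> \<Union>C" using dominated_graph_scale[OF dom] by blast
  next
    fix x y assume "(x,y) \<in> \<Union>C"
    then show "y \<le> norm x" using dominated_graph_bound[OF dom] by blast
  qed
qed

(* The value c prescribed at a new vector v must satisfy
     yb - \<parallel>b - v\<parallel> \<le> c \<le> \<parallel>a + v\<parallel> - ya   for all (a,ya), (b,yb) in the graph;
   such a c exists since the lower bounds never exceed the upper bounds. *)
lemma dominated_graph_extension_value: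
  assumes g: "dominated_graph g" and zero: "(0, 0) \<in> g"
  obtains c where "\<And>b yb. (b,yb) \<in> g \<Longrightarrow> yb - norm (b - v) \<le> c"
    and "\<And>a ya. (a,ya) \<in> g \<Longrightarrow> c \<le> norm (a + v) - ya"
proof -
  have lower_le_upper: "yb - norm (b - v) \<le> norm (a + v) - ya"
    if "(a,ya) \<in> g" "(b,yb) \<in> g" for a ya b yb
  proof -
    have "ya + yb \<le> norm (a + b)"
      using dominated_graph_bound[OF g dominated_graph_add[OF g that]] .
    also have "norm (a + b) \<le> norm (a + v) + norm (b - v)"
      using norm_triangle_ineq[of "a + v" "b - v"] by simp
    finally show ?thesis by simp
  qed
  define S where "S = {yb - norm (b - v) | b yb. (b,yb) \<in> g}"
  have "S \<noteq> {}" using zero unfolding S_def by blast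
  moreover have "bdd_above S"
    unfolding S_def bdd_above_def using lower_le_upper[OF zero] by blast
  ultimately show ?thesis
    by (intro that[of "Sup S"] cSup_upper cSup_least) (auto simp: S_def lower_le_upper)
qed

lemma extension_value_dominated:
  assumes g: "dominated_graph g" and ag: "(a,ya) \<in> g"
    and lower: "\<And>b yb. (b,yb) \<in> g \<Longrightarrow> yb - norm (b - v) \<le> c"
    and upper: "\<And>a ya. (a,ya) \<in> g \<Longrightarrow> c \<le> norm (a + v) - ya"
  shows "ya + t * c \<le> norm (a + t *\<^sub>R v)"
proof (cases t "0::real" rule: linorder_cases)
  case equal
  then show ?thesis using dominated_graph_bound[OF g ag] by simp
next
  case greater
  have "c \<le> norm ((1/t) *\<^sub>R a + v) - (1/t) * ya"
    using upper[OF dominated_graph_scale[OF g ag]] .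
  then have "t * c \<le> t * norm ((1/t) *\<^sub>R a + v) - ya"
    using greater by (simp add: field_simps)
  also have "t * norm ((1/t) *\<^sub>R a + v) = norm (t *\<^sub>R ((1/t) *\<^sub>R a + v))"
    using greater by simp
  also have "t *\<^sub>R ((1/t) *\<^sub>R a + v) = a + t *\<^sub>R v"
    using greater by (simp add: algebra_simps)
  finally show ?thesis by simp
next
  case less
  have "(-1/t) * ya - norm ((-1/t) *\<^sub>R a - v) \<le> c"
    using lower[OF dominated_graph_scale[OF g ag]] .
  then have "(-t) * ((-1/t) * ya - norm ((-1/t) *\<^sub>R a - v)) \<le> (-t) * c"
    using less by (intro mult_left_mono) auto
  then have "ya - (-t) * norm ((-1/t) *\<^sub>R a - v) \<le> - (t * c)"
    using less by (simp add: right_diff_distrib)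
  also have "(-t) * norm ((-1/t) *\<^sub>R a - v) = norm ((-t) *\<^sub>R ((-1/t) *\<^sub>R a - v))"
    using less by simp
  also have "(-t) *\<^sub>R ((-1/t) *\<^sub>R a - v) = a + t *\<^sub>R v"
    using less by (simp add: algebra_simps)
  finally show ?thesis by simp
qed

lemma dominated_graph_extend:
  assumes g: "dominated_graph g" and zero: "(0, 0) \<in> g" and v: "\<forall>y. (v,y) \<notin> g"
  shows "\<exists>g'. dominated_graph g' \<and> g \<subset> g'"
proof -
  obtain c where lower: "\<And>b yb. (b,yb) \<in> g \<Longrightarrow> yb - norm (b - v) \<le> c"
    and upper: "\<And>a ya. (a,ya) \<in> g \<Longrightarrow> c \<le> norm (a + v) - ya"
    using dominated_graph_extension_value[OF g zero] by metis
  define g' where "g' = {(a + t *\<^sub>R v, ya + t * c) | a ya t. (a,ya) \<in> g}"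
  (* v is linearly independent of the domain of g, so the coefficient t is unique *)
  have coeff_unique: "t = s"
    if "(a,ya) \<in> g" "(b,yb) \<in> g" "a + t *\<^sub>R v = b + s *\<^sub>R v" for a ya b yb t s
  proof (rule ccontr)
    assume ts: "t \<noteq> s"
    have "(b + (-1) *\<^sub>R a, yb + (-1) * ya) \<in> g"
      using g that(1,2) by (blast intro: dominated_graph_add dominated_graph_scale)
    then have "(b - a, yb - ya) \<in> g" by simp
    then have "((1/(t-s)) *\<^sub>R (b - a), (1/(t-s)) * (yb - ya)) \<in> g"
      by (rule dominated_graph_scale[OF g])
    moreover have "b - a = (t - s) *\<^sub>R v"
      using that(3) by (simp add: algebra_simps)
    then have "(1/(t-s)) *\<^sub>R (b - a) = v"
      using ts by simp
    ultimately show False using v by metis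
  qed
  have "dominated_graph g'"
    unfolding dominated_graph_def
  proof (intro conjI allI impI)
    fix x y y' assume "(x,y) \<in> g'" "(x,y') \<in> g'"
    then obtain a ya t b yb s where A: "(a,ya) \<in> g" "x = a + t *\<^sub>R v" "y = ya + t * c"
      and B: "(b,yb) \<in> g" "x = b + s *\<^sub>R v" "y' = yb + s * c"
      unfolding g'_def by blast
    then have "t = s" using coeff_unique by metis
    then show "y = y'" using A B dominated_graph_fun[OF g] by auto
  next
    fix x y x' y' assume "(x,y) \<in> g'" "(x',y') \<in> g'"
    then obtain a ya t b yb s where "(a,ya) \<in> g" "x = a + t *\<^sub>R v" "y = ya + t * c"
      and "(b,yb) \<in> g" "x' = b + s *\<^sub>R v" "y' = yb + s * c"
      unfolding g'_def by blast
    moreover have "x + x' = (a + b) + (t + s) *\<^sub>R v" "y + y' = (ya + yb) + (t + s) * c"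
      using calculation by (simp_all add: algebra_simps)
    ultimately show "(x + x', y + y') \<in> g'"
      unfolding g'_def using dominated_graph_add[OF g] by blast
  next
    fix x y r assume "(x,y) \<in> g'"
    then obtain a ya t where "(a,ya) \<in> g" "x = a + t *\<^sub>R v" "y = ya + t * c"
      unfolding g'_def by blast
    moreover have "r *\<^sub>R x = r *\<^sub>R a + (r * t) *\<^sub>R v" "r * y = r * ya + (r * t) * c"
      using calculation by (simp_all add: algebra_simps)
    ultimately show "(r *\<^sub>R x, r * y) \<in> g'"
      unfolding g'_def using dominated_graph_scale[OF g] by blast
  next
    fix x y assume "(x,y) \<in> g'"
    then show "y \<le> norm x"
      unfolding g'_def using extension_value_dominated[OF g _ lower upper] by blast
  qed
  moreover have "g \<subseteq> g'"
    unfolding g'_def by (force intro: exI[of _ 0])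
  moreover have "(v, c) \<in> g'"
    unfolding g'_def using zero by (force intro: exI[of _ 1])
  ultimately show ?thesis using v by blast
qed

lemma hahn_banach_norming:
  fixes x0 :: "'a::real_normed_vector"
  obtains f where "linear f" "\<And>x. \<bar>f x\<bar> \<le> norm x" "f x0 = norm x0"
proof -
  define A where "A = {g. dominated_graph g \<and> (x0, norm x0) \<in> g}"
  have "\<exists>M\<in>A. \<forall>X\<in>A. M \<subseteq> X \<longrightarrow> X = M"
  proof (rule Zorn_Lemma2, intro ballI)
    fix C assume C: "C \<in> chains A"
    show "\<exists>U\<in>A. \<forall>X\<in>C. X \<subseteq> U"
    proof (cases "C = {}")
      case True
      have "(x0, norm x0) \<in> {(c *\<^sub>R x0, c * norm x0) | c. True}"
        by (force intro: exI[of _ 1])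
      then show ?thesis using True dominated_graph_line unfolding A_def by blast
    next
      case False
      have "C \<in> chains {g. dominated_graph g}"
        using C unfolding chains_def A_def by blast
      then have "dominated_graph (\<Union>C)" by (rule dominated_graph_chain_Union)
      then show ?thesis using False C unfolding A_def chains_def by blast
    qed
  qed
  then obtain M where M: "dominated_graph M" "(x0, norm x0) \<in> M"
    and maximal: "\<And>X. dominated_graph X \<Longrightarrow> (x0, norm x0) \<in> X \<Longrightarrow> M \<subseteq> X \<Longrightarrow> X = M"
    unfolding A_def by blast
  have "(0, 0) \<in> M" using dominated_graph_scale[OF M(1) M(2), of 0] by simp
  then have total: "\<exists>y. (x,y) \<in> M" for x
    using dominated_graph_extend[OF M(1)] maximal M(2) by blast
  define f where "f x = (THE y. (x,y) \<in> M)" for x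
  have graph: "(x, f x) \<in> M" for x
    unfolding f_def by (rule theI') (use total dominated_graph_fun[OF M(1)] in blast)
  have graph_value: "f x = y" if "(x,y) \<in> M" for x y
    using dominated_graph_fun[OF M(1) graph that] .
  have lin: "linear f"
  proof (rule linearI)
    show "f (x + y) = f x + f y" for x y
      by (rule graph_value, rule dominated_graph_add[OF M(1) graph graph])
    show "f (c *\<^sub>R x) = c *\<^sub>R f x" for c x
      using graph_value[OF dominated_graph_scale[OF M(1) graph]] by simp
  qed
  have "\<bar>f x\<bar> \<le> norm x" for x
    using dominated_graph_bound[OF M(1) graph, of x] dominated_graph_bound[OF M(1) graph, of "-x"]
      linear_neg[OF lin, of x] by (simp add: abs_le_iff)
  then show ?thesis using that lin graph_value[OF M(2)] by blast
qed


subsection \<open>Infinite-dimensional subspaces\<close>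

definition infinite_dimensional :: "'a::real_vector set \<Rightarrow> bool" where
  "infinite_dimensional V \<longleftrightarrow> (\<forall>B. finite B \<longrightarrow> \<not> V \<subseteq> span B)"

lemma infinite_dimensional_nonzero:
  assumes "infinite_dimensional V"
  obtains u where "u \<in> V" "u \<noteq> 0"
proof -
  have "\<not> V \<subseteq> span {}" using assms unfolding infinite_dimensional_def by blast
  then show ?thesis using that by auto
qed

(* A hyperplane section of an infinite-dimensional subspace is infinite-dimensional:
   if V \<inter> ker g \<subseteq> span B with g w \<noteq> 0, then V \<subseteq> span (insert w B). *)
lemma infinite_dimensional_kernel:
  fixes g :: "'a::real_vector \<Rightarrow> real"
  assumes V: "subspace V" "infinite_dimensional V" and g: "linear g"
  shows "subspace (V \<inter> {x. g x = 0}) \<and> infinite_dimensional (V \<inter> {x. g x = 0})"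
proof
  have "subspace {x. g x = 0}"
    unfolding subspace_def using g by (simp add: linear_add linear_scale linear_0)
  then show "subspace (V \<inter> {x. g x = 0})" using subspace_inter[OF V(1)] by blast
  show "infinite_dimensional (V \<inter> {x. g x = 0})"
    unfolding infinite_dimensional_def
  proof (intro allI impI notI)
    fix B assume B: "finite B" "V \<inter> {x. g x = 0} \<subseteq> span B"
    show False
    proof (cases "V \<subseteq> {x. g x = 0}")
      case True
      then show False using B V(2) unfolding infinite_dimensional_def by blast
    next
      case False
      then obtain w where w: "w \<in> V" "g w \<noteq> 0" by blast
      have "V \<subseteq> span (insert w B)"
      proof
        fix x assume x: "x \<in> V"
        define c where "c = g x / g w"
        have "x - c *\<^sub>R w \<in> V \<inter> {x. g x = 0}"
          using V(1) x w g by (simp add: subspace_diff subspace_scale linear_diff linear_scale c_def)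
        then have "x - c *\<^sub>R w \<in> span (insert w B)"
          using B(2) span_mono[of B "insert w B"] by blast
        moreover have "c *\<^sub>R w \<in> span (insert w B)" by (simp add: span_base span_mul)
        ultimately have "(x - c *\<^sub>R w) + c *\<^sub>R w \<in> span (insert w B)" by (rule span_add)
        then show "x \<in> span (insert w B)" by simp
      qed
      then show False using V(2) B(1) unfolding infinite_dimensional_def by blast
    qed
  qed
qed

lemma infinite_dimensional_kernels:
  fixes f :: "nat \<Rightarrow> 'a::real_vector \<Rightarrow> real"
  assumes V: "subspace V" "infinite_dimensional V" and f: "\<And>k. linear (f k)"
  shows "subspace (V \<inter> {x. \<forall>k<N. f k x = 0}) \<and> infinite_dimensional (V \<inter> {x. \<forall>k<N. f k x = 0})"
proof (induction N)
  case 0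
  then show ?case using V by simp
next
  case (Suc N)
  have "V \<inter> {x. \<forall>k<Suc N. f k x = 0} = (V \<inter> {x. \<forall>k<N. f k x = 0}) \<inter> {x. f N x = 0}"
    using less_Suc_eq by auto
  then show ?case using infinite_dimensional_kernel[OF conjunct1[OF Suc] conjunct2[OF Suc] f] by simp
qed


subsection \<open>A separable infinite-dimensional subspace\<close>

(* In a space that is not finitely spanned, greedily adding a vector outside the
   current span yields an increasing chain of independent sets of size n. *)
definition independent_chain :: "nat \<Rightarrow> 'a::real_vector set" where
  "independent_chain n = ((\<lambda>S. insert (SOME v. v \<notin> span S) S) ^^ n) {}"

lemma independent_chain_mono: "m \<le> n \<Longrightarrow> independent_chain m \<subseteq> independent_chain n"
  by (induction n rule: dec_induct) (auto simp: independent_chain_def)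

lemma independent_chain_props:
  assumes not_fin: "\<And>B::'a::real_vector set. finite B \<Longrightarrow> \<exists>v. v \<notin> span B"
  shows "finite (independent_chain n :: 'a set) \<and> independent (independent_chain n :: 'a set)
         \<and> card (independent_chain n :: 'a set) = n"
proof (induction n)
  case 0
  then show ?case by (simp add: independent_chain_def independent_empty)
next
  case (Suc n)
  let ?S = "independent_chain n :: 'a set"
  have new: "(SOME v. v \<notin> span ?S) \<notin> span ?S"
    by (rule someI_ex, rule not_fin) (use Suc in blast)
  then have "(SOME v. v \<notin> span ?S) \<notin> ?S" using span_base by blast
  moreover have "independent_chain (Suc n) = insert (SOME v. v \<notin> span ?S) ?S"
    by (simp add: independent_chain_def)
  ultimately show ?case using Suc new independent_insertI by auto
qed

definition rational_span :: "'a::real_vector set \<Rightarrow> 'a set" where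
  "rational_span T = (\<lambda>q. \<Sum>v\<in>T. q v *\<^sub>R v) ` (T \<rightarrow>\<^sub>E \<rat>)"

lemma countable_rational_span: "finite T \<Longrightarrow> countable (rational_span T)"
  unfolding rational_span_def by (intro countable_image countable_PiE countable_rat)

lemma span_subset_closure_rational_span:
  fixes T :: "'a::real_normed_vector set"
  assumes "finite T"
  shows "span T \<subseteq> closure (rational_span T)"
proof
  fix x assume "x \<in> span T"
  then obtain u where x: "x = (\<Sum>v\<in>T. u v *\<^sub>R v)" using span_finite[OF assms] by blast
  have "\<forall>a::real. \<exists>r. (\<forall>k. r k \<in> \<rat>) \<and> r \<longlonglongrightarrow> a"
    using Rats_closure_real closure_sequential by blast
  from choice[OF this] obtain R :: "real \<Rightarrow> nat \<Rightarrow> real" where "\<forall>a. (\<forall>k. R a k \<in> \<rat>) \<and> R a \<longlonglongrightarrow> a" by blast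
  then have R: "\<And>a k. R a k \<in> \<rat>" "\<And>a. R a \<longlonglongrightarrow> a" by blast+
  define s where "s k = (\<Sum>v\<in>T. R (u v) k *\<^sub>R v)" for k
  have "s k \<in> rational_span T" for k
  proof -
    have "s k = (\<Sum>v\<in>T. restrict (\<lambda>v. R (u v) k) T v *\<^sub>R v)"
      unfolding s_def by (intro sum.cong) auto
    moreover have "restrict (\<lambda>v. R (u v) k) T \<in> T \<rightarrow>\<^sub>E \<rat>" using R(1) by simp
    ultimately show ?thesis unfolding rational_span_def by blast
  qed
  moreover have "s \<longlonglongrightarrow> x"
    unfolding s_def x by (intro tendsto_sum tendsto_scaleR R(2) tendsto_const)
  ultimately show "x \<in> closure (rational_span T)" unfolding closure_sequential by blast
qed

(* The union of the spans of the chain is an infinite-dimensional subspace in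
   which the countable set of rational combinations is dense. *)
lemma separable_infinite_dimensional_subspace:
  assumes not_fin: "\<And>B::'a::real_normed_vector set. finite B \<Longrightarrow> \<exists>v. v \<notin> span B"
  obtains V D :: "'a::real_normed_vector set"
  where "subspace V" "infinite_dimensional V" "countable D" "V \<subseteq> closure D"
proof
  let ?T = "independent_chain :: nat \<Rightarrow> 'a set"
  have fin: "finite (?T n)" and indep: "independent (?T n)" and card: "card (?T n) = n" for n
    using independent_chain_props[OF not_fin] by blast+
  show "subspace (\<Union>n. span (?T n))"
    unfolding subspace_def
  proof (intro conjI ballI allI)
    show "0 \<in> (\<Union>n. span (?T n))" using span_zero by blast
  next
    fix a b assume "a \<in> (\<Union>n. span (?T n))" "b \<in> (\<Union>n. span (?T n))"
    then obtain m n where "a \<in> span (?T m)" "b \<in> span (?T n)" by blast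
    then have "a \<in> span (?T (max m n))" "b \<in> span (?T (max m n))"
      using span_mono[OF independent_chain_mono[of m "max m n"]]
        span_mono[OF independent_chain_mono[of n "max m n"]] by auto
    then show "a + b \<in> (\<Union>n. span (?T n))" using span_add by blast
  next
    fix c a assume "a \<in> (\<Union>n. span (?T n))"
    then show "c *\<^sub>R a \<in> (\<Union>n. span (?T n))" using span_mul by blast
  qed
  show "infinite_dimensional (\<Union>n. span (?T n))"
    unfolding infinite_dimensional_def
  proof (intro allI impI notI)
    fix B :: "'a set" assume B: "finite B" "(\<Union>n. span (?T n)) \<subseteq> span B"
    then have "?T (Suc (card B)) \<subseteq> span B" using span_superset by blast
    then have "card (?T (Suc (card B))) \<le> card B"
      using independent_span_bound[OF B(1) indep] by blast
    then show False using card by simp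
  qed
  show "countable (\<Union>n. rational_span (?T n))"
    using countable_rational_span[OF fin] by blast
  have "closure (rational_span (?T n)) \<subseteq> closure (\<Union>n. rational_span (?T n))" for n
    by (rule closure_mono) blast
  then show "(\<Union>n. span (?T n)) \<subseteq> closure (\<Union>n. rational_span (?T n))"
    using span_subset_closure_rational_span[OF fin] by (meson UN_least subset_trans)
qed


subsection \<open>A separating sequence of norming functionals\<close>

(* Norming the points of a countable set D gives functionals of norm \<le> 1 that
   do not all vanish at any nonzero point of the closure of D. *)
lemma separating_norming_functionals:
  fixes D :: "'a::real_normed_vector set"
  assumes "countable D"
  obtains f :: "nat \<Rightarrow> 'a \<Rightarrow> real"
  where "\<And>k. bounded_linear (f k)" "\<And>k x. \<bar>f k x\<bar> \<le> norm x"
    and "\<And>x. x \<in> closure D \<Longrightarrow> x \<noteq> 0 \<Longrightarrow> \<exists>k. f k x \<noteq> 0"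
proof -
  define z where "z k = from_nat_into D k" for k
  have "\<forall>k. \<exists>g. linear g \<and> (\<forall>x. \<bar>g x\<bar> \<le> norm x) \<and> g (z k) = norm (z k)"
    by (metis hahn_banach_norming)
  then obtain f where lin: "\<And>k. linear (f k)" and bound: "\<And>k x. \<bar>f k x\<bar> \<le> norm x"
    and norming: "\<And>k. f k (z k) = norm (z k)"
    by metis
  have "bounded_linear (f k)" for k
    using lin[of k] bound[of k] by (intro bounded_linear_intro[where K=1]) (auto simp: linear_add linear_scale)
  moreover have "\<exists>k. f k x \<noteq> 0" if x: "x \<in> closure D" "x \<noteq> 0" for x
  proof -
    have "norm x / 3 > 0" using x(2) by simp
    then obtain y where y: "y \<in> D" "dist y x < norm x / 3"
      using x(1) closure_approachable[of x D] by blast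
    obtain k where k: "z k = y" using from_nat_into_surj[OF assms y(1)] z_def by blast
    have "f k x = f k y - f k (y - x)" using linear_diff[OF lin[of k]] by simp
    moreover have "f k y = norm y" using norming[of k] unfolding k .
    moreover have "\<bar>f k (y - x)\<bar> \<le> dist y x" using bound[of k "y - x"] by (simp add: dist_norm)
    moreover have "norm x - dist y x \<le> norm y"
      using norm_triangle_ineq2[of x y] by (simp add: dist_norm norm_minus_commute)
    ultimately have "f k x > 0" using y(2) by linarith
    then have "f k x \<noteq> 0" by simp
    then show ?thesis by blast
  qed
  ultimately show ?thesis using that bound by blast
qed


subsection \<open>Weighted norms and the set K\<close>

definition weighted_norm :: "(nat \<Rightarrow> 'a::real_normed_vector \<Rightarrow> real) \<Rightarrow> nat \<Rightarrow> 'a \<Rightarrow> real" where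
  "weighted_norm f N x = norm x + (\<Sum>k<N. (1/2)^Suc k * \<bar>f k x\<bar>)"

lemma weighted_norm_scale:
  assumes f: "\<And>k. linear (f k)" and c: "c \<ge> 0"
  shows "weighted_norm f N (c *\<^sub>R x) = c * weighted_norm f N x"
proof -
  have "\<bar>f k (c *\<^sub>R x)\<bar> = c * \<bar>f k x\<bar>" for k
    using linear_scale[OF f[of k], of c x] c by (simp add: abs_mult)
  then show ?thesis
    unfolding weighted_norm_def using c by (simp add: sum_distrib_left distrib_left mult.left_commute)
qed

lemma weighted_norm_convex:
  assumes f: "\<And>k. linear (f k)" and uv: "u \<ge> 0" "v \<ge> 0"
  shows "weighted_norm f N (u *\<^sub>R x + v *\<^sub>R y) \<le> u * weighted_norm f N x + v * weighted_norm f N y"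
proof -
  have "norm (u *\<^sub>R x + v *\<^sub>R y) \<le> u * norm x + v * norm y"
    using norm_triangle_ineq[of "u *\<^sub>R x" "v *\<^sub>R y"] uv by simp
  moreover have "\<bar>f k (u *\<^sub>R x + v *\<^sub>R y)\<bar> \<le> u * \<bar>f k x\<bar> + v * \<bar>f k y\<bar>" for k
    using f[of k] uv abs_triangle_ineq[of "u * f k x" "v * f k y"]
    by (simp add: linear_add linear_scale abs_mult)
  then have "(1/2)^Suc k * \<bar>f k (u *\<^sub>R x + v *\<^sub>R y)\<bar> \<le>
      (1/2)^Suc k * (u * \<bar>f k x\<bar> + v * \<bar>f k y\<bar>)" for k
    by (intro mult_left_mono) simp_all
  then have "(1/2)^Suc k * \<bar>f k (u *\<^sub>R x + v *\<^sub>R y)\<bar> \<le>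
      u * ((1/2)^Suc k * \<bar>f k x\<bar>) + v * ((1/2)^Suc k * \<bar>f k y\<bar>)" for k
    by (simp add: algebra_simps)
  then have "(\<Sum>k<N. (1/2)^Suc k * \<bar>f k (u *\<^sub>R x + v *\<^sub>R y)\<bar>) \<le>
        (\<Sum>k<N. u * ((1/2)^Suc k * \<bar>f k x\<bar>) + v * ((1/2)^Suc k * \<bar>f k y\<bar>))"
    by (rule sum_mono)
  ultimately show ?thesis
    unfolding weighted_norm_def by (simp add: sum.distrib sum_distrib_left algebra_simps)
qed

lemma geometric_tail: "N \<le> M \<Longrightarrow> (\<Sum>k=N..<M. (1/2::real)^Suc k) = (1/2)^N - (1/2)^M"
  by (induction M rule: dec_induct) simp_all

lemma weighted_norm_annihilated:
  assumes f: "\<And>k x. \<bar>f k x\<bar> \<le> norm x" and w: "norm w = 1" "\<And>k. k < N \<Longrightarrow> f k w = 0"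
  shows "weighted_norm f M w \<le> 1 + (1/2)^N"
proof -
  have "(\<Sum>k<M. (1/2)^Suc k * \<bar>f k w\<bar>) \<le> (\<Sum>k<M. if k < N then 0 else (1/2::real)^Suc k)"
    using f[of _ w] w by (intro sum_mono) (auto intro: mult_left_le)
  also have "\<dots> = (\<Sum>k=N..<M. (1/2)^Suc k)"
    by (rule sum.mono_neutral_cong_right) auto
  also have "\<dots> \<le> (1/2)^N"
  proof (cases "N \<le> M")
    case True
    then show ?thesis by (simp only: geometric_tail) simp
  qed simp
  finally show ?thesis unfolding weighted_norm_def using w by simp
qed

lemma weighted_unit_ball_closed_convex:
  assumes f: "\<And>k. bounded_linear (f k)"
  shows "closed {x. \<forall>N. weighted_norm f N x \<le> 1}" "convex {x. \<forall>N. weighted_norm f N x \<le> 1}"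
proof -
  have "continuous_on UNIV (f k)" for k
    using f by (rule linear_continuous_on)
  then have "continuous_on UNIV (weighted_norm f N)" for N
    unfolding weighted_norm_def by (intro continuous_intros)
  then show "closed {x. \<forall>N. weighted_norm f N x \<le> 1}"
    by (intro closed_Collect_all closed_Collect_le continuous_intros)
  show "convex {x. \<forall>N. weighted_norm f N x \<le> 1}"
    unfolding convex_def
  proof (intro ballI allI impI, clarify)
    fix x y :: 'a and u v :: real and N
    assume xy: "\<forall>N. weighted_norm f N x \<le> 1" "\<forall>N. weighted_norm f N y \<le> 1"
      and uv: "0 \<le> u" "0 \<le> v" "u + v = 1"
    have "weighted_norm f N (u *\<^sub>R x + v *\<^sub>R y) \<le> u * weighted_norm f N x + v * weighted_norm f N y"
      using weighted_norm_convex[OF bounded_linear.linear[OF f] uv(1,2)] .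
    also have "\<dots> \<le> u * 1 + v * 1"
      using xy uv by (intro add_mono mult_left_mono) auto
    finally show "weighted_norm f N (u *\<^sub>R x + v *\<^sub>R y) \<le> 1" using uv by simp
  qed
qed

(* A point x \<noteq> 0 with f_k x \<noteq> 0 has weighted norm > \<parallel>x\<parallel> for large N, so points
   of the weighted unit ball where the f_k separate lie in the open unit ball. *)
lemma weighted_unit_ball_in_ball:
  assumes x: "\<forall>N. weighted_norm f N x \<le> 1" and sep: "x \<noteq> 0 \<Longrightarrow> \<exists>k. f k x \<noteq> 0"
  shows "norm x < 1"
proof (rule ccontr)
  assume "\<not> norm x < 1"
  then have "x \<noteq> 0" by auto
  then obtain k where k: "f k x \<noteq> 0" using sep by blast
  have "(1/2)^Suc k * \<bar>f k x\<bar> \<le> (\<Sum>j<Suc k. (1/2)^Suc j * \<bar>f j x\<bar>)"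
    by (rule member_le_sum[where f="\<lambda>j. (1/2)^Suc j * \<bar>f j x\<bar>"]) auto
  moreover have "(1/2::real)^Suc k * \<bar>f k x\<bar> > 0" using k by simp
  ultimately have "weighted_norm f (Suc k) x > 1"
    unfolding weighted_norm_def using \<open>\<not> norm x < 1\<close> by linarith
  then show False using x by (meson not_le)
qed

(* In an infinite-dimensional subspace the weighted unit ball reaches out to the unit sphere:
   rescale a unit vector of the common kernel of f_0, ..., f_(N-1) by 1/(1 + 2^-N). *)
lemma weighted_unit_ball_near_sphere:
  assumes V: "subspace V" "infinite_dimensional V"
    and lin: "\<And>k. linear (f k)" and bound: "\<And>k x. \<bar>f k x\<bar> \<le> norm x"
  obtains x where "x \<in> V" "\<forall>M. weighted_norm f M x \<le> 1" "1 - (1/2)^N \<le> norm x"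
proof -
  have "infinite_dimensional (V \<inter> {x. \<forall>k<N. f k x = 0})"
    using infinite_dimensional_kernels[where f=f and N=N, OF V lin] by blast
  then obtain u where u: "u \<in> V \<inter> {x. \<forall>k<N. f k x = 0}" "u \<noteq> 0"
    by (rule infinite_dimensional_nonzero)
  define w where "w = (1 / norm u) *\<^sub>R u"
  have wV: "w \<in> V" unfolding w_def using u(1) V(1) by (simp add: subspace_scale)
  have w_norm: "norm w = 1" unfolding w_def using u(2) by simp
  have w_kernel: "f k w = 0" if "k < N" for k
    unfolding w_def using linear_scale[OF lin[of k]] u(1) that by simp
  define d :: real where "d = (1/2)^N"
  have d: "0 \<le> d" "d \<le> 1" unfolding d_def by (simp_all add: power_le_one)
  define x where "x = (1 / (1 + d)) *\<^sub>R w"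
  have "x \<in> V" unfolding x_def using wV V(1) by (simp add: subspace_scale)
  moreover have "weighted_norm f M x \<le> 1" for M
  proof -
    have "weighted_norm f M x = (1 / (1 + d)) * weighted_norm f M w"
      unfolding x_def using d by (intro weighted_norm_scale lin) simp
    also have "\<dots> \<le> (1 / (1 + d)) * (1 + d)"
      using weighted_norm_annihilated[OF bound w_norm w_kernel] d unfolding d_def
      by (intro mult_left_mono) auto
    finally show ?thesis using d by simp
  qed
  moreover have "1 - d \<le> norm x"
  proof -
    have "(1 - d) * (1 + d) \<le> 1" by (simp add: algebra_simps)
    then show ?thesis unfolding x_def using w_norm d by (simp add: field_simps)
  qed
  ultimately show ?thesis using that unfolding d_def by blast
qed

lemma sup_norm_eq_one:
  fixes K :: "'a::real_normed_vector set"
  assumes "K \<noteq> {}" "K \<subseteq> ball 0 1" and near: "\<And>N. \<exists>x\<in>K. 1 - (1/2)^N \<le> norm x"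
  shows "(SUP x\<in>K. norm x) = 1"
proof (rule antisym)
  show "(SUP x\<in>K. norm x) \<le> 1"
    using assms(1,2) by (intro cSUP_least) auto
  have bdd: "bdd_above (norm ` K)" using assms(2) by (auto intro!: bdd_aboveI[where M=1])
  show "1 \<le> (SUP x\<in>K. norm x)"
  proof (rule ccontr)
    assume "\<not> 1 \<le> (SUP x\<in>K. norm x)"
    then obtain N where N: "(1/2::real)^N < 1 - (SUP x\<in>K. norm x)"
      using real_arch_pow_inv[of "1 - (SUP x\<in>K. norm x)" "1/2"] by auto
    obtain x where "x \<in> K" "1 - (1/2)^N \<le> norm x" using near by blast
    then show False using N cSUP_upper[OF _ bdd, of x] by linarith
  qed
qed


theorem corollary8:
  fixes X_witness :: "'a::banach itself"
  assumes "\<not> (\<exists>B::'a set. finite B \<and> span B = UNIV)"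
  shows "\<exists>K::'a set. closed K \<and> convex K \<and> K \<noteq> {} \<and> K \<subseteq> ball 0 1 \<and>
           (SUP x\<in>K. norm x) = 1"
proof -
  have "\<And>B::'a set. finite B \<Longrightarrow> \<exists>v. v \<notin> span B" using assms by blast
  then obtain V D :: "'a set"
    where V: "subspace V" "infinite_dimensional V" and D: "countable D" "V \<subseteq> closure D"
    by (rule separable_infinite_dimensional_subspace)
  obtain f :: "nat \<Rightarrow> 'a \<Rightarrow> real"
    where bl: "\<And>k. bounded_linear (f k)" and bound: "\<And>k x. \<bar>f k x\<bar> \<le> norm x"
      and sep: "\<And>x. x \<in> closure D \<Longrightarrow> x \<noteq> 0 \<Longrightarrow> \<exists>k. f k x \<noteq> 0"
    using separating_norming_functionals[OF D(1)] by auto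
  have lin: "\<And>k. linear (f k)" using bl by (simp add: bounded_linear.linear)
  define K where "K = closure V \<inter> {x. \<forall>N. weighted_norm f N x \<le> 1}"
  have "closed K" "convex K"
    unfolding K_def using weighted_unit_ball_closed_convex[where f=f, OF bl] V(1)
    by (simp_all add: closed_Int convex_Int subspace_imp_convex)
  moreover have in_ball: "K \<subseteq> ball 0 1"
  proof
    fix x assume x: "x \<in> K"
    have "closure V \<subseteq> closure D" using D(2) by (simp add: closure_minimal)
    then have "x \<noteq> 0 \<Longrightarrow> \<exists>k. f k x \<noteq> 0" using x sep unfolding K_def by blast
    then have "norm x < 1" using x weighted_unit_ball_in_ball[where f=f] unfolding K_def by blast
    then show "x \<in> ball 0 1" by simp
  qed
  moreover have near: "\<exists>x\<in>K. 1 - (1/2)^N \<le> norm x" for N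
  proof -
    obtain x where "x \<in> V" "\<forall>M. weighted_norm f M x \<le> 1" "1 - (1/2)^N \<le> norm x"
      using weighted_unit_ball_near_sphere[where f=f and N=N, OF V lin bound] by blast
    then show ?thesis unfolding K_def using closure_subset by blast
  qed
  moreover have "K \<noteq> {}" using near by blast
  ultimately show ?thesis using sup_norm_eq_one[OF _ in_ball near] by blast
qed

end
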